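(* Let $\mathbb S$ be the free semigroup action on the compact metric space $X$ generated by continuous maps $g_1,\dots,g_p$, with entropy function $h_{top}(\cdot)$. (i) If $K\subset X$ is a countable closed subset with a unique limit point $x_0$, then $h_{top}(x_0)\ge h_{top}(K,\mathbb S)$. (ii) For every $x_0\in X$ there exists a countable closed subset $K\subset X$ with $x_0\in K$ such that $x_0$ is the unique limit point of $K$ in $X$ and $h_{top}(x_0)=h_{top}(K,\mathbb S)$.
   Context: Setting: $(X,d)$ compact metric space, $g_1,\dots,g_p:X\to X$ continuous; $G_n^*$ the set of words $\underline g=g_{i_n}\cdots g_{i_1}$, $i_j\in\{1,\dots,p\}$; $d_{\underline g}(x,y)=\max_{0\le j\le n}d(g_{i_j}\cdots g_{i_1}x,g_{i_j}\cdots g_{i_1}y)$; $s(K,\underline g,\varepsilon)$ and $b_d(K,\underline g,\varepsilon)$ are the maximal cardinality of a $(\underline g,\varepsilon)$-separated subset of $K$, resp. the minimal cardinality of a $(\underline g,\varepsilon)$-spanning subset of $K$. $h_{top}(K,\mathbb S)=\lim_{\varepsilon\to0}\limsup_n\frac1n\log\big(p^{-n}\sum_{\underline g\in G_n^*}s(K,\underline g,\varepsilon)\big)$. Entropy function: $B_d(K,\mathbb S,\varepsilon)=\limsup_n\frac1n\log\big(p^{-n}\sum_{\underline g\in G_n^*}b_d(K,\underline g,\varepsilon)\big)$, $h_d(x,\varepsilon)=\inf\{B_d(K,\mathbb S,\varepsilon):K\text{ compact neighbourhood of }x\}$, $h_{top}(x)=\lim_{\varepsilon\to0^+}h_d(x,\varepsilon)$.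 *)

theory Defs
  imports "HOL-Analysis.Analysis"
begin

text \<open>Generators are g 0, ..., g (p-1). A word g_{i_n} ... g_{i_1} of length n is
  represented by the list [i_1, ..., i_n] (first applied map first).\<close>

definition words :: "nat \<Rightarrow> nat \<Rightarrow> nat list set" where
  "words p n = {w. length w = n \<and> set w \<subseteq> {..<p}}"

definition orbit :: "(nat \<Rightarrow> 'a \<Rightarrow> 'a) \<Rightarrow> nat list \<Rightarrow> nat \<Rightarrow> 'a \<Rightarrow> 'a" where
  "orbit g w j x = fold (\<lambda>i y. g i y) (take j w) x"

definition bowen_dist :: "(nat \<Rightarrow> 'a::metric_space \<Rightarrow> 'a) \<Rightarrow> nat list \<Rightarrow> 'a \<Rightarrow> 'a \<Rightarrow> real" where
  "bowen_dist g w x y = Max ((\<lambda>j. dist (orbit g w j x) (orbit g w j y)) ` {0..length w})"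

definition separated :: "(nat \<Rightarrow> 'a::metric_space \<Rightarrow> 'a) \<Rightarrow> nat list \<Rightarrow> real \<Rightarrow> 'a set \<Rightarrow> bool" where
  "separated g w \<epsilon> E \<longleftrightarrow> (\<forall>x\<in>E. \<forall>y\<in>E. x \<noteq> y \<longrightarrow> bowen_dist g w x y > \<epsilon>)"

definition spanning :: "(nat \<Rightarrow> 'a::metric_space \<Rightarrow> 'a) \<Rightarrow> nat list \<Rightarrow> real \<Rightarrow> 'a set \<Rightarrow> 'a set \<Rightarrow> bool" where
  "spanning g w \<epsilon> K F \<longleftrightarrow> (\<forall>x\<in>K. \<exists>y\<in>F. bowen_dist g w x y \<le> \<epsilon>)"

definition sep_num :: "(nat \<Rightarrow> 'a::metric_space \<Rightarrow> 'a) \<Rightarrow> 'a set \<Rightarrow> nat list \<Rightarrow> real \<Rightarrow> nat" where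
  "sep_num g K w \<epsilon> = Sup {card E | E. E \<subseteq> K \<and> finite E \<and> separated g w \<epsilon> E}"

definition span_num :: "(nat \<Rightarrow> 'a::metric_space \<Rightarrow> 'a) \<Rightarrow> 'a set \<Rightarrow> nat list \<Rightarrow> real \<Rightarrow> nat" where
  "span_num g K w \<epsilon> = Inf {card F | F. F \<subseteq> K \<and> finite F \<and> spanning g w \<epsilon> K F}"

definition htop_set :: "(nat \<Rightarrow> 'a::metric_space \<Rightarrow> 'a) \<Rightarrow> nat \<Rightarrow> 'a set \<Rightarrow> ereal" where
  "htop_set g p K = Lim (at_right 0) (\<lambda>\<epsilon>::real.
     limsup (\<lambda>n. ereal (1 / real n * ln ((1 / real p ^ n) *
        (\<Sum>w\<in>words p n. real (sep_num g K w \<epsilon>))))))"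

definition Bd :: "(nat \<Rightarrow> 'a::metric_space \<Rightarrow> 'a) \<Rightarrow> nat \<Rightarrow> 'a set \<Rightarrow> real \<Rightarrow> ereal" where
  "Bd g p K \<epsilon> = limsup (\<lambda>n. ereal (1 / real n * ln ((1 / real p ^ n) *
        (\<Sum>w\<in>words p n. real (span_num g K w \<epsilon>)))))"

definition compact_nbhd :: "'a::metric_space set \<Rightarrow> 'a set \<Rightarrow> 'a \<Rightarrow> bool" where
  "compact_nbhd X K x \<longleftrightarrow> K \<subseteq> X \<and> compact K \<and> (\<exists>U. open U \<and> x \<in> U \<and> U \<inter> X \<subseteq> K)"

definition hd_pt :: "'a::metric_space set \<Rightarrow> (nat \<Rightarrow> 'a \<Rightarrow> 'a) \<Rightarrow> nat \<Rightarrow> 'a \<Rightarrow> real \<Rightarrow> ereal" where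
  "hd_pt X g p x \<epsilon> = Inf {Bd g p K \<epsilon> | K. compact_nbhd X K x}"

definition htop_pt :: "'a::metric_space set \<Rightarrow> (nat \<Rightarrow> 'a \<Rightarrow> 'a) \<Rightarrow> nat \<Rightarrow> 'a \<Rightarrow> ereal" where
  "htop_pt X g p x = Lim (at_right 0) (hd_pt X g p x)"

end

theory Submission
  imports Defs
begin

text \<open>(i) If x0 is the only limit point of the closed set K, then every compact
  neighbourhood K' of x0 contains all but finitely many points of K. A (w, 2 eps)-separated
  subset of K therefore has at most b(K', w, eps) + |K - K'| points, and the additive constant
  does not affect exponential growth rates; hence the eps-entropy of K at scale 2 eps is at most
  B(K', eps), for every K'.

  (ii) Let B k be the closed ball of radius 1/(k+1) around x0 in X. For each k and each
  scale 1/(j+1) with j \<le> k choose a time n \<ge> k at which the separated-set growth of B k is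
  close to h(x0, 1/(j+1)), and finite maximal separated subsets of B k realising it at that
  time. These finite sets, x0, and points of X converging to x0 form a countable closed set K
  whose only limit point is x0, and along the chosen times the growth of K is at least that of
  B k. So h(x0, 1/(j+1)) is at most the limsup for K at scale 1/(j+1), and with (i)
  the two entropies agree.\<close>

section \<open>Words and Bowen distances\<close>

lemma finite_words: "finite (words p n)"
  unfolding words_def using finite_lists_length_eq[of "{..<p}" n] by (simp add: conj_commute)

lemma card_words: "card (words p n) = p ^ n"
  unfolding words_def using card_lists_length_eq[of "{..<p}" n] by (simp add: conj_commute)

lemma set_subset_if_in_words: "w \<in> words p n \<Longrightarrow> set w \<subseteq> {..<p}"
  unfolding words_def by blast

lemma dist_orbit_le_bowen_dist:
  "j \<le> length w \<Longrightarrow> dist (orbit g w j x) (orbit g w j y) \<le> bowen_dist g w x y"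
  unfolding bowen_dist_def by (rule Max_ge) auto

lemma bowen_dist_self [simp]: "bowen_dist g w x x = 0"
  unfolding bowen_dist_def by simp

lemma bowen_dist_commute: "bowen_dist g w x y = bowen_dist g w y x"
  unfolding bowen_dist_def by (simp add: dist_commute)

lemma bowen_dist_triangle: "bowen_dist g w x z \<le> bowen_dist g w x y + bowen_dist g w y z"
  unfolding bowen_dist_def[of g w x z]
proof (subst Max_le_iff, simp_all, intro ballI)
  fix j assume "j \<in> {0..length w}"
  then have "dist (orbit g w j x) (orbit g w j y) + dist (orbit g w j y) (orbit g w j z)
      \<le> bowen_dist g w x y + bowen_dist g w y z"
    by (intro add_mono dist_orbit_le_bowen_dist) auto
  then show "dist (orbit g w j x) (orbit g w j z) \<le> bowen_dist g w x y + bowen_dist g w y z"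
    using dist_triangle[of "orbit g w j x" "orbit g w j z" "orbit g w j y"] by linarith
qed

lemma bowen_dist_less:
  "(\<And>j. j \<le> length w \<Longrightarrow> dist (orbit g w j x) (orbit g w j y) < e) \<Longrightarrow> bowen_dist g w x y < e"
  unfolding bowen_dist_def by (subst Max_less_iff) auto

definition avg_growth :: "nat \<Rightarrow> nat \<Rightarrow> (nat list \<Rightarrow> real) \<Rightarrow> real" where
  "avg_growth p n a = 1 / real n * ln (1 / real p ^ n * (\<Sum>w\<in>words p n. a w))"

lemma sum_words_ge_power:
  assumes "\<And>w. w \<in> words p n \<Longrightarrow> 1 \<le> a w"
  shows "real p ^ n \<le> (\<Sum>w\<in>words p n. a w)"
proof -
  have "real p ^ n = (\<Sum>w\<in>words p n. 1)" by (simp add: card_words)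
  also have "\<dots> \<le> (\<Sum>w\<in>words p n. a w)" using assms by (rule sum_mono)
  finally show ?thesis .
qed

lemma avg_growth_mono:
  assumes "p \<ge> 1" and "\<And>w. w \<in> words p n \<Longrightarrow> 1 \<le> a w" and "\<And>w. w \<in> words p n \<Longrightarrow> a w \<le> b w"
  shows "avg_growth p n a \<le> avg_growth p n b"
proof -
  have "0 < real p ^ n" using \<open>p \<ge> 1\<close> by simp
  then have "0 < (\<Sum>w\<in>words p n. a w)" using sum_words_ge_power[of p n a, OF assms(2)] by linarith
  moreover have "(\<Sum>w\<in>words p n. a w) \<le> (\<Sum>w\<in>words p n. b w)" using assms(3) by (rule sum_mono)
  ultimately show ?thesis
    unfolding avg_growth_def using \<open>0 < real p ^ n\<close>
    by (intro mult_left_mono ln_mono mult_pos_pos) (auto intro: mult_left_mono)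
qed

lemma avg_growth_scale:
  assumes "p \<ge> 1" and "c > 0" and "\<And>w. w \<in> words p n \<Longrightarrow> 1 \<le> a w"
  shows "avg_growth p n (\<lambda>w. c * a w) = avg_growth p n a + ln c / real n"
proof -
  have "0 < real p ^ n" using \<open>p \<ge> 1\<close> by simp
  moreover have "0 < (\<Sum>w\<in>words p n. a w)"
    using \<open>0 < real p ^ n\<close> sum_words_ge_power[of p n a, OF assms(3)] by linarith
  ultimately have "0 < 1 / real p ^ n * (\<Sum>w\<in>words p n. a w)" by simp
  moreover have "1 / real p ^ n * (\<Sum>w\<in>words p n. c * a w) = c * (1 / real p ^ n * (\<Sum>w\<in>words p n. a w))"
    by (simp add: sum_distrib_left)
  ultimately have "ln (1 / real p ^ n * (\<Sum>w\<in>words p n. c * a w))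
      = ln c + ln (1 / real p ^ n * (\<Sum>w\<in>words p n. a w))"
    using \<open>c > 0\<close> by (metis ln_mult_pos)
  then show ?thesis unfolding avg_growth_def by (simp add: algebra_simps)
qed

section \<open>Limits in the extended reals\<close>

lemma Lim_at_right_0_antimono_eq_SUP:
  fixes f :: "real \<Rightarrow> ereal"
  assumes antimono: "\<And>a b. 0 < a \<Longrightarrow> a \<le> b \<Longrightarrow> f b \<le> f a"
  shows "Lim (at_right 0) f = (SUP e\<in>{0<..}. f e)"
proof (rule tendsto_Lim)
  show "\<not> trivial_limit (at_right (0::real))" by simp
  show "(f \<longlongrightarrow> (SUP e\<in>{0<..}. f e)) (at_right 0)"
  proof (rule order_tendstoI)
    fix a assume "a < (SUP e\<in>{0<..}. f e)"
    then obtain e0 where e0: "e0 > 0" "a < f e0" by (auto simp: less_SUP_iff)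
    then show "eventually (\<lambda>x. a < f x) (at_right 0)"
      unfolding eventually_at_right_field using antimono
      by (intro exI[of _ e0]) (auto intro: order_less_le_trans)
  next
    fix a assume "(SUP e\<in>{0<..}. f e) < a"
    moreover have "f y \<le> (SUP e\<in>{0<..}. f e)" if "0 < y" for y
      using that by (intro SUP_upper) auto
    ultimately show "eventually (\<lambda>x. f x < a) (at_right 0)"
      unfolding eventually_at_right_field by (intro exI[of _ 1]) (auto intro: order_le_less_trans)
  qed
qed

lemma limsup_const_div_real: "limsup (\<lambda>n. ereal (c / real n)) = 0"
  using lim_imp_Limsup[OF _ tendsto_ereal[OF lim_const_over_n[of c]]] by (simp add: zero_ereal_def)

text \<open>Truncating at k keeps the approximants finite even when h is infinite; subtracting
  1/(k+1) puts them strictly below h whenever h is not -\<infinity>.\<close>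
definition lower_approx :: "ereal \<Rightarrow> nat \<Rightarrow> ereal" where
  "lower_approx h k = min h (ereal (real k)) - ereal (1 / real (Suc k))"

lemma LIMSEQ_lower_approx: "lower_approx h \<longlonglongrightarrow> h"
proof -
  have "(\<lambda>k. ereal (real k)) \<longlonglongrightarrow> \<infinity>"
    using tendsto_PInfty_eq_at_top filterlim_real_sequentially by blast
  then have "(\<lambda>k. min h (ereal (real k))) \<longlonglongrightarrow> min h \<infinity>"
    by (intro tendsto_min tendsto_const)
  moreover have "(\<lambda>k. ereal (1 / real (Suc k))) \<longlonglongrightarrow> 0"
    using LIMSEQ_Suc[OF tendsto_ereal[OF lim_const_over_n[of 1]]] by (simp add: zero_ereal_def)
  ultimately have "lower_approx h \<longlonglongrightarrow> min h \<infinity> - 0"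
    unfolding lower_approx_def by (intro tendsto_diff_ereal_general) auto
  then show ?thesis by simp
qed

lemma exists_late_index_ge_lower_approx:
  fixes s :: "nat \<Rightarrow> real"
  assumes "h \<le> limsup (\<lambda>n. ereal (s n))"
  shows "\<exists>n\<ge>k. lower_approx h k \<le> ereal (s n)"
proof (cases "h = -\<infinity>")
  case True
  then show ?thesis by (auto simp: lower_approx_def)
next
  case False
  then obtain r where r: "min h (ereal (real k)) = ereal r"
    by (cases "min h (ereal (real k))") (auto simp: min_def split: if_splits)
  then have "lower_approx h k = ereal (r - 1 / real (Suc k))" by (simp add: lower_approx_def)
  also have "\<dots> < ereal r" by simp
  also have "\<dots> \<le> h" by (metis r min.cobounded1)
  also note assms
  also have "limsup (\<lambda>n. ereal (s n)) \<le> (SUP n\<in>{k..}. ereal (s n))"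
    unfolding limsup_INF_SUP by (rule INF_lower) simp
  finally show ?thesis by (auto simp: less_SUP_iff intro: less_imp_le)
qed

lemma limsup_reindex_le:
  fixes s :: "nat \<Rightarrow> ereal"
  assumes "\<And>k. k \<le> r k"
  shows "limsup (\<lambda>k. s (r k)) \<le> limsup s"
  unfolding limsup_INF_SUP
proof (rule INF_mono)
  fix N show "\<exists>M\<in>UNIV. (SUP k\<in>{M..}. s (r k)) \<le> (SUP n\<in>{N..}. s n)"
    using assms order_trans by (intro bexI[of _ N] SUP_least SUP_upper) auto
qed

lemma le_limsup_if_lower_approx_le:
  fixes s :: "nat \<Rightarrow> real"
  assumes "\<And>k. k \<le> r k" and "eventually (\<lambda>k. lower_approx h k \<le> ereal (s (r k))) sequentially"
  shows "h \<le> limsup (\<lambda>n. ereal (s n))"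
proof -
  have "h = limsup (lower_approx h)"
    using lim_imp_Limsup[OF _ LIMSEQ_lower_approx] by simp
  also have "\<dots> \<le> limsup (\<lambda>k. ereal (s (r k)))"
    using assms(2) by (rule Limsup_mono)
  also have "\<dots> \<le> limsup (\<lambda>n. ereal (s n))"
    using limsup_reindex_le[OF assms(1)] .
  finally show ?thesis .
qed

section \<open>Sets with a single limit point\<close>

lemma finite_diff_open_if_unique_limpt:
  fixes K :: "'a::metric_space set"
  assumes "compact K" "\<And>y. y islimpt K \<Longrightarrow> y = x0" "open U" "x0 \<in> U"
  shows "finite (K - U)"
proof (rule ccontr)
  assume "infinite (K - U)"
  moreover have "compact (K - U)" using compact_diff assms(1,3) by blast
  ultimately obtain y where "y \<in> K - U" "y islimpt (K - U)"
    unfolding compact_eq_Bolzano_Weierstrass by blast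
  then show False using islimpt_subset[of y "K - U" K] assms(2,4) by blast
qed

lemma shrinking_Union_unique_limpt:
  fixes x0 :: "'a::metric_space"
  assumes fin: "\<And>k. finite (A k)" and near: "\<And>k. A k \<subseteq> cball x0 (1 / real (Suc k))"
    and y: "y islimpt insert x0 (\<Union>k. A k)"
  shows "y = x0"
proof (rule ccontr)
  assume "y \<noteq> x0"
  define r where "r = dist y x0 / 2"
  have "r > 0" using \<open>y \<noteq> x0\<close> unfolding r_def by simp
  then obtain k0 where k0: "1 / real (Suc k0) < r"
    using reals_Archimedean by (auto simp: inverse_eq_divide)
  have "insert x0 (\<Union>k. A k) \<inter> ball y r \<subseteq> (\<Union>k<k0. A k)"
  proof
    fix z assume z: "z \<in> insert x0 (\<Union>k. A k) \<inter> ball y r"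
    have "dist y x0 \<le> dist y z + dist x0 z" using dist_triangle[of y x0 z] by (simp add: dist_commute)
    then have "r \<le> dist x0 z" using z unfolding r_def by simp
    then obtain k where "z \<in> A k" "r \<le> dist x0 z" using z \<open>r > 0\<close> by auto
    moreover have "\<not> k0 \<le> k"
    proof
      assume "k0 \<le> k"
      then have "1 / real (Suc k) \<le> 1 / real (Suc k0)" by (simp add: frac_le)
      then show False using near \<open>z \<in> A k\<close> \<open>r \<le> dist x0 z\<close> k0 by fastforce
    qed
    ultimately show "z \<in> (\<Union>k<k0. A k)" by auto
  qed
  moreover have "finite (\<Union>k<k0. A k)" using fin by simp
  ultimately show False
    using y \<open>r > 0\<close> unfolding islimpt_eq_infinite_ball by (meson finite_subset)
qed

lemma shrinking_Union_countable_closed: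
  fixes x0 :: "'a::metric_space"
  assumes fin: "\<And>k. finite (A k)" and near: "\<And>k. A k \<subseteq> cball x0 (1 / real (Suc k))"
    and other: "\<And>k. A k - {x0} \<noteq> {}"
  defines "K \<equiv> insert x0 (\<Union>k. A k)"
  shows "countable K" "closed K" "x0 islimpt K" "\<And>y. y islimpt K \<Longrightarrow> y = x0"
proof -
  show unique: "\<And>y. y islimpt K \<Longrightarrow> y = x0"
    unfolding K_def using shrinking_Union_unique_limpt[OF fin near] .
  show "countable K" unfolding K_def using fin by (simp add: countable_finite)
  have "x0 \<in> K" unfolding K_def by simp
  show "closed K"
    unfolding closed_limpt
  proof (intro allI impI)
    fix y assume "y islimpt K"
    then show "y \<in> K" using unique \<open>x0 \<in> K\<close> by simp
  qed
  show "x0 islimpt K"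
    unfolding islimpt_approachable
  proof (intro allI impI)
    fix d :: real assume "0 < d"
    then obtain k where k: "1 / real (Suc k) < d" using reals_Archimedean by (auto simp: inverse_eq_divide)
    obtain x where x: "x \<in> A k" "x \<noteq> x0" using other[of k] by blast
    then have "x \<in> K" unfolding K_def by blast
    moreover have "dist x x0 < d" using near[of k] x(1) k by (auto simp: dist_commute)
    ultimately show "\<exists>x'\<in>K. x' \<noteq> x0 \<and> dist x' x0 < d" using x(2) by blast
  qed
qed

lemma exists_countable_closed_superset_unique_limpt:
  fixes x0 :: "'a::metric_space"
  assumes x0: "x0 \<in> X" "x0 islimpt X"
    and A: "\<And>k. finite (A k)" "\<And>k. A k \<subseteq> X \<inter> cball x0 (1 / real (Suc k))"
  shows "\<exists>K. K \<subseteq> X \<and> countable K \<and> closed K \<and> x0 \<in> K \<and> x0 islimpt K \<and>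
    (\<forall>y. y islimpt K \<longrightarrow> y = x0) \<and> (\<forall>k. A k \<subseteq> K)"
proof -
  have "\<forall>k. \<exists>x. x \<in> X \<and> x \<noteq> x0 \<and> dist x x0 < 1 / real (Suc k)"
    using x0(2) unfolding islimpt_approachable by (meson of_nat_0_less_iff zero_less_Suc zero_less_divide_1_iff)
  then obtain xs where xs: "\<And>k. xs k \<in> X \<and> xs k \<noteq> x0 \<and> dist (xs k) x0 < 1 / real (Suc k)"
    by metis
  define K where "K = insert x0 (\<Union>k. insert (xs k) (A k))"
  have fin: "finite (insert (xs k) (A k))" for k
    using A(1) by simp
  have near: "insert (xs k) (A k) \<subseteq> cball x0 (1 / real (Suc k))" for k
    using xs[of k] A(2)[of k] by (auto simp: dist_commute)
  have other: "insert (xs k) (A k) - {x0} \<noteq> {}" for k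
    using xs[of k] by blast
  note K = shrinking_Union_countable_closed[OF fin near other, folded K_def]
  moreover have "K \<subseteq> X" unfolding K_def using x0(1) xs A(2) by blast
  moreover have "x0 \<in> K" "\<forall>k. A k \<subseteq> K" unfolding K_def by blast+
  ultimately show ?thesis by blast
qed

lemma mem_compact_nbhd:
  "x \<in> X \<Longrightarrow> compact_nbhd X K x \<Longrightarrow> x \<in> K"
  unfolding compact_nbhd_def by blast

section \<open>Separated and spanning sets\<close>

locale free_semigroup_action =
  fixes X :: "'a::metric_space set" and g :: "nat \<Rightarrow> 'a \<Rightarrow> 'a" and p :: nat
  assumes compact_X: "compact X" and p_pos: "p \<ge> 1"
    and continuous_on_generator: "\<And>i. i < p \<Longrightarrow> continuous_on X (g i)"
    and generator_into: "\<And>i. i < p \<Longrightarrow> g i ` X \<subseteq> X"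
begin

lemma fold_generators_continuous_into:
  "set l \<subseteq> {..<p} \<Longrightarrow> continuous_on X (fold g l) \<and> fold g l ` X \<subseteq> X"
proof (induction l)
  case Nil
  then show ?case by simp
next
  case (Cons i l)
  then have i: "continuous_on X (g i)" "g i ` X \<subseteq> X"
    and l: "continuous_on X (fold g l)" "fold g l ` X \<subseteq> X"
    using continuous_on_generator generator_into by auto
  have "continuous_on X (fold g l \<circ> g i)"
    using continuous_on_compose[OF i(1) continuous_on_subset[OF l(1) i(2)]] .
  moreover have "(fold g l \<circ> g i) ` X \<subseteq> X"
    using i(2) l(2) by (auto simp: image_subset_iff)
  ultimately show ?case by simp
qed

lemma uniformly_continuous_on_orbit:
  "set w \<subseteq> {..<p} \<Longrightarrow> uniformly_continuous_on X (orbit g w j)"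
proof -
  assume "set w \<subseteq> {..<p}"
  then have "set (take j w) \<subseteq> {..<p}" using set_take_subset order_trans by metis
  then have "continuous_on X (fold g (take j w))" using fold_generators_continuous_into by blast
  moreover have "orbit g w j = fold g (take j w)" by (rule ext) (simp add: orbit_def)
  ultimately show ?thesis using compact_uniformly_continuous[OF _ compact_X] by simp
qed

lemma bowen_dist_uniformly_small:
  assumes w: "set w \<subseteq> {..<p}" and e: "e > 0"
  shows "\<exists>d>0. \<forall>x\<in>X. \<forall>y\<in>X. dist x y < d \<longrightarrow> bowen_dist g w x y < e"
proof -
  have "\<exists>d>0. \<forall>x\<in>X. \<forall>y\<in>X. dist x y < d \<longrightarrow> dist (orbit g w j x) (orbit g w j y) < e" for j
    using uniformly_continuous_on_orbit[OF w, of j] e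
    unfolding uniformly_continuous_on_def by (metis dist_commute)
  then obtain D where D: "\<And>j. D j > 0"
    "\<And>j x y. x \<in> X \<Longrightarrow> y \<in> X \<Longrightarrow> dist x y < D j \<Longrightarrow> dist (orbit g w j x) (orbit g w j y) < e"
    by metis
  define d where "d = Min (D ` {0..length w})"
  have "d > 0" unfolding d_def using D by (subst Min_gr_iff) auto
  moreover have d_le: "d \<le> D j" if "j \<le> length w" for j unfolding d_def using that by (intro Min_le) auto
  ultimately show ?thesis
  proof (intro exI[of _ d] conjI ballI impI)
    fix x y assume "x \<in> X" "y \<in> X" "dist x y < d"
    show "bowen_dist g w x y < e"
    proof (rule bowen_dist_less)
      fix j assume "j \<le> length w"
      then have "dist x y < D j" using \<open>dist x y < d\<close> d_le by fastforce
      then show "dist (orbit g w j x) (orbit g w j y) < e" using D(2) \<open>x \<in> X\<close> \<open>y \<in> X\<close> by blast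
    qed
  qed
qed

lemma separated_card_bounded:
  assumes K: "compact K" "K \<subseteq> X" and w: "set w \<subseteq> {..<p}" and e: "e > 0"
  shows "\<exists>N. \<forall>E. E \<subseteq> K \<and> separated g w e E \<longrightarrow> finite E \<and> card E \<le> N"
proof -
  obtain d where d: "d > 0" "\<And>x y. x \<in> X \<Longrightarrow> y \<in> X \<Longrightarrow> dist x y < d \<Longrightarrow> bowen_dist g w x y < e"
    using bowen_dist_uniformly_small[OF w e] by blast
  have "K \<subseteq> (\<Union>c\<in>K. ball c (d/2))" using d(1) by auto
  then obtain C where C: "C \<subseteq> K" "finite C" "K \<subseteq> (\<Union>c\<in>C. ball c (d/2))"
    using compactE_image[OF K(1), of K "\<lambda>c. ball c (d/2)"] by blast
  have "finite E \<and> card E \<le> card C" if E: "E \<subseteq> K" "separated g w e E" for E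
  proof -
    have "\<forall>x\<in>E. \<exists>c\<in>C. dist c x < d/2" using C(3) E(1) by fastforce
    then obtain f where f: "\<And>x. x \<in> E \<Longrightarrow> f x \<in> C \<and> dist (f x) x < d/2"
      by metis
    have "inj_on f E"
    proof (rule inj_onI, rule ccontr)
      fix x y assume xy: "x \<in> E" "y \<in> E" "f x = f y" "x \<noteq> y"
      have "dist x y < d"
        using f[OF xy(1)] f[OF xy(2)] xy(3) dist_triangle3[of x y "f x"] by simp
      then have "bowen_dist g w x y < e" using d(2) xy(1,2) E(1) K(2) by blast
      moreover have "e < bowen_dist g w x y" using E(2) xy unfolding separated_def by blast
      ultimately show False by simp
    qed
    moreover have "f ` E \<subseteq> C" using f by blast
    ultimately show ?thesis using C(2) inj_on_finite card_inj_on_le by blast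
  qed
  then show ?thesis by blast
qed

lemma sep_num_attained:
  assumes "compact K" "K \<subseteq> X" "set w \<subseteq> {..<p}" "e > 0"
  shows "\<exists>E. E \<subseteq> K \<and> finite E \<and> separated g w e E \<and> card E = sep_num g K w e"
    and card_le_sep_num: "\<And>E. E \<subseteq> K \<Longrightarrow> separated g w e E \<Longrightarrow> card E \<le> sep_num g K w e"
proof -
  obtain N where N: "\<And>E. E \<subseteq> K \<Longrightarrow> separated g w e E \<Longrightarrow> finite E \<and> card E \<le> N"
    using separated_card_bounded[OF assms] by blast
  let ?S = "{card E | E. E \<subseteq> K \<and> finite E \<and> separated g w e E}"
  have fin: "finite ?S" by (rule finite_subset[of _ "{..N}"]) (use N in auto)
  have ne: "?S \<noteq> {}" unfolding separated_def by blast
  have eq: "sep_num g K w e = Max ?S" unfolding sep_num_def by (rule cSup_eq_Max[OF fin ne])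
  show "\<exists>E. E \<subseteq> K \<and> finite E \<and> separated g w e E \<and> card E = sep_num g K w e"
    using Max_in[OF fin ne] unfolding eq by auto
  show "\<And>E. E \<subseteq> K \<Longrightarrow> separated g w e E \<Longrightarrow> card E \<le> sep_num g K w e"
    unfolding eq using N fin by (intro Max_ge) auto
qed

lemma maximal_separated_spanning:
  assumes K: "compact K" "K \<subseteq> X" and w: "set w \<subseteq> {..<p}" and e: "e > 0"
    and E: "E \<subseteq> K" "finite E" "separated g w e E" "card E = sep_num g K w e"
  shows "spanning g w e K E"
  unfolding spanning_def
proof (rule ballI, rule ccontr)
  fix y assume y: "y \<in> K" and "\<not> (\<exists>x\<in>E. bowen_dist g w y x \<le> e)"
  then have far: "\<And>x. x \<in> E \<Longrightarrow> e < bowen_dist g w y x" by auto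
  then have "y \<notin> E" using e by force
  have "separated g w e (insert y E)"
    using E(3) far bowen_dist_commute unfolding separated_def by (metis insert_iff)
  then have "card (insert y E) \<le> sep_num g K w e"
    using card_le_sep_num[OF K w e] E(1) y by blast
  then show False using E(2,4) \<open>y \<notin> E\<close> by simp
qed

lemma span_num_attained:
  assumes "compact K" "K \<subseteq> X" "set w \<subseteq> {..<p}" "e > 0"
  shows "\<exists>F. F \<subseteq> K \<and> finite F \<and> spanning g w e K F \<and> card F = span_num g K w e"
proof -
  obtain E where "E \<subseteq> K" "finite E" "separated g w e E" "card E = sep_num g K w e"
    using sep_num_attained[OF assms] by blast
  then have "{card F | F. F \<subseteq> K \<and> finite F \<and> spanning g w e K F} \<noteq> {}"
    using maximal_separated_spanning[OF assms] by blast
  from Inf_nat_def1[OF this] show ?thesis unfolding span_num_def by auto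
qed

lemma span_num_le_card:
  "F \<subseteq> K \<Longrightarrow> finite F \<Longrightarrow> spanning g w e K F \<Longrightarrow> span_num g K w e \<le> card F"
  unfolding span_num_def by (rule cInf_lower) auto

lemma span_num_le_sep_num:
  assumes "compact K" "K \<subseteq> X" "set w \<subseteq> {..<p}" "e > 0"
  shows "span_num g K w e \<le> sep_num g K w e"
proof -
  obtain E where E: "E \<subseteq> K" "finite E" "separated g w e E" "card E = sep_num g K w e"
    using sep_num_attained[OF assms] by blast
  then have "spanning g w e K E" by (rule maximal_separated_spanning[OF assms])
  then show ?thesis unfolding E(4)[symmetric] by (rule span_num_le_card[OF E(1,2)])
qed

lemma span_num_pos:
  assumes "compact K" "K \<subseteq> X" "K \<noteq> {}" "set w \<subseteq> {..<p}" "e > 0"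
  shows "1 \<le> span_num g K w e"
proof -
  obtain F where F: "F \<subseteq> K" "finite F" "spanning g w e K F" "card F = span_num g K w e"
    using span_num_attained[of K w e] assms by blast
  have "F \<noteq> {}" using F(3) \<open>K \<noteq> {}\<close> unfolding spanning_def by blast
  then have "1 \<le> card F" using F(2) by (simp add: Suc_le_eq card_gt_0_iff)
  then show ?thesis using F(4) by simp
qed

lemma sep_num_pos:
  assumes "compact K" "K \<subseteq> X" "K \<noteq> {}" "set w \<subseteq> {..<p}" "e > 0"
  shows "1 \<le> sep_num g K w e"
  using span_num_pos[OF assms] span_num_le_sep_num[of K w e] assms by linarith

lemma sep_num_antimono:
  assumes "compact K" "K \<subseteq> X" "set w \<subseteq> {..<p}" "0 < e1" "e1 \<le> e2"
  shows "sep_num g K w e2 \<le> sep_num g K w e1"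
proof -
  obtain E where E: "E \<subseteq> K" "separated g w e2 E" "card E = sep_num g K w e2"
    using sep_num_attained(1)[of K w e2] assms by auto
  then have "separated g w e1 E" using \<open>e1 \<le> e2\<close> unfolding separated_def by force
  then show ?thesis using card_le_sep_num[of K w e1 E] assms E by simp
qed

lemma span_num_antimono:
  assumes "compact K" "K \<subseteq> X" "set w \<subseteq> {..<p}" "0 < e1" "e1 \<le> e2"
  shows "span_num g K w e2 \<le> span_num g K w e1"
proof -
  obtain F where F: "F \<subseteq> K" "finite F" "spanning g w e1 K F" "card F = span_num g K w e1"
    using span_num_attained[of K w e1] assms by blast
  then have "spanning g w e2 K F" using \<open>e1 \<le> e2\<close> unfolding spanning_def by force
  then show ?thesis using span_num_le_card[OF F(1,2)] F(4) by simp
qed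

lemma sep_num_mono:
  assumes "compact K" "K \<subseteq> K'" "compact K'" "K' \<subseteq> X" "set w \<subseteq> {..<p}" "e > 0"
  shows "sep_num g K w e \<le> sep_num g K' w e"
proof -
  obtain E where "E \<subseteq> K" "separated g w e E" "card E = sep_num g K w e"
    using sep_num_attained(1)[of K w e] assms by blast
  then show ?thesis using card_le_sep_num[of K' w e E] assms by auto
qed

text \<open>Points of a (w, 2e)-separated set lying outside F have distinct nearest points in a
  (w, e)-spanning set of K'.\<close>
lemma sep_num_le_span_num_add:
  assumes K: "compact K" "K \<subseteq> X" and K': "compact K'" "K' \<subseteq> X"
    and F: "finite F" "K \<subseteq> K' \<union> F" and w: "set w \<subseteq> {..<p}" and e: "e > 0"
  shows "sep_num g K w (2 * e) \<le> span_num g K' w e + card F"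
proof -
  have "2 * e > 0" using e by simp
  then obtain E where E: "E \<subseteq> K" "finite E" "separated g w (2 * e) E" "card E = sep_num g K w (2 * e)"
    using sep_num_attained[OF K w] by blast
  obtain S where S: "finite S" "spanning g w e K' S" "card S = span_num g K' w e"
    using span_num_attained[OF K' w e] by blast
  have "\<forall>x\<in>E - F. \<exists>s\<in>S. bowen_dist g w x s \<le> e"
    using S(2) E(1) F(2) unfolding spanning_def by blast
  then obtain f where f: "\<And>x. x \<in> E - F \<Longrightarrow> f x \<in> S \<and> bowen_dist g w x (f x) \<le> e"
    by metis
  have "inj_on f (E - F)"
  proof (rule inj_onI, rule ccontr)
    fix x y assume xy: "x \<in> E - F" "y \<in> E - F" "f x = f y" "x \<noteq> y"
    have "bowen_dist g w x y \<le> bowen_dist g w x (f x) + bowen_dist g w (f y) y"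
      using bowen_dist_triangle[of g w x y "f x"] xy(3) by simp
    also have "\<dots> \<le> 2 * e" using f[OF xy(1)] f[OF xy(2)] bowen_dist_commute[of g w y] by simp
    finally show False using E(3) xy unfolding separated_def by force
  qed
  then have "card (E - F) \<le> card S" using card_inj_on_le[of f "E - F" S] f S(1) by blast
  moreover have "card E \<le> card (E - F) + card F"
    using diff_card_le_card_Diff[OF F(1), of E] by arith
  ultimately show ?thesis using E(4) S(3) by linarith
qed

section \<open>Entropy of a set and local entropy at a point\<close>

definition sep_rate :: "'a set \<Rightarrow> real \<Rightarrow> nat \<Rightarrow> real" where
  "sep_rate K e n = avg_growth p n (\<lambda>w. real (sep_num g K w e))"

definition span_rate :: "'a set \<Rightarrow> real \<Rightarrow> nat \<Rightarrow> real" where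
  "span_rate K e n = avg_growth p n (\<lambda>w. real (span_num g K w e))"

lemma htop_set_eq_Lim_sep_rate:
  "htop_set g p K = Lim (at_right 0) (\<lambda>e. limsup (\<lambda>n. ereal (sep_rate K e n)))"
  by (simp add: htop_set_def sep_rate_def avg_growth_def)

lemma Bd_eq_limsup_span_rate: "Bd g p K e = limsup (\<lambda>n. ereal (span_rate K e n))"
  by (simp add: Bd_def span_rate_def avg_growth_def)

lemma sep_rate_antimono:
  assumes K: "compact K" "K \<subseteq> X" "K \<noteq> {}" and e: "0 < e1" "e1 \<le> e2"
  shows "sep_rate K e2 n \<le> sep_rate K e1 n"
  unfolding sep_rate_def
proof (rule avg_growth_mono[OF p_pos])
  fix w assume "w \<in> words p n"
  then have w: "set w \<subseteq> {..<p}" by (rule set_subset_if_in_words)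
  show "1 \<le> real (sep_num g K w e2)" using sep_num_pos[OF K w] e by simp
  show "real (sep_num g K w e2) \<le> real (sep_num g K w e1)"
    using sep_num_antimono[OF K(1,2) w e] by simp
qed

lemma span_rate_antimono:
  assumes K: "compact K" "K \<subseteq> X" "K \<noteq> {}" and e: "0 < e1" "e1 \<le> e2"
  shows "span_rate K e2 n \<le> span_rate K e1 n"
  unfolding span_rate_def
proof (rule avg_growth_mono[OF p_pos])
  fix w assume "w \<in> words p n"
  then have w: "set w \<subseteq> {..<p}" by (rule set_subset_if_in_words)
  show "1 \<le> real (span_num g K w e2)" using span_num_pos[OF K w] e by simp
  show "real (span_num g K w e2) \<le> real (span_num g K w e1)"
    using span_num_antimono[OF K(1,2) w e] by simp
qed

lemma span_rate_le_sep_rate: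
  assumes K: "compact K" "K \<subseteq> X" "K \<noteq> {}" and e: "0 < e"
  shows "span_rate K e n \<le> sep_rate K e n"
  unfolding span_rate_def sep_rate_def
proof (rule avg_growth_mono[OF p_pos])
  fix w assume "w \<in> words p n"
  then have w: "set w \<subseteq> {..<p}" by (rule set_subset_if_in_words)
  show "1 \<le> real (span_num g K w e)" using span_num_pos[OF K w e] by simp
  show "real (span_num g K w e) \<le> real (sep_num g K w e)"
    using span_num_le_sep_num[OF K(1,2) w e] by simp
qed

lemma sep_rate_mono:
  assumes K: "compact K" "K \<noteq> {}" "K \<subseteq> K'" and K': "compact K'" "K' \<subseteq> X" and e: "0 < e"
  shows "sep_rate K e n \<le> sep_rate K' e n"
  unfolding sep_rate_def
proof (rule avg_growth_mono[OF p_pos])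
  fix w assume "w \<in> words p n"
  then have w: "set w \<subseteq> {..<p}" by (rule set_subset_if_in_words)
  have "K \<subseteq> X" using K(3) K'(2) by blast
  then show "1 \<le> real (sep_num g K w e)" using sep_num_pos[OF K(1) _ K(2) w e] by simp
  show "real (sep_num g K w e) \<le> real (sep_num g K' w e)"
    using sep_num_mono[OF K(1,3) K' w e] by simp
qed

lemma sep_rate_le_span_rate_add:
  assumes K: "compact K" "K \<subseteq> X" "K \<noteq> {}" and K': "compact K'" "K' \<subseteq> X" "K' \<noteq> {}"
    and F: "finite F" "K \<subseteq> K' \<union> F" and e: "0 < e"
  shows "sep_rate K (2 * e) n \<le> span_rate K' e n + ln (1 + card F) / real n"
proof -
  have "sep_num g K w (2 * e) \<le> (1 + card F) * span_num g K' w e" if w: "w \<in> words p n" for w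
  proof -
    have "sep_num g K w (2 * e) \<le> span_num g K' w e + card F"
      using sep_num_le_span_num_add[OF K(1,2) K'(1,2) F set_subset_if_in_words[OF w] e] .
    moreover have "card F \<le> card F * span_num g K' w e"
      using span_num_pos[OF K' set_subset_if_in_words[OF w] e] by simp
    moreover have "(1 + card F) * span_num g K' w e = span_num g K' w e + card F * span_num g K' w e"
      by simp
    ultimately show ?thesis by linarith
  qed
  then have "sep_rate K (2 * e) n \<le> avg_growth p n (\<lambda>w. (1 + card F) * real (span_num g K' w e))"
    unfolding sep_rate_def
  proof (intro avg_growth_mono[OF p_pos])
    fix w assume "w \<in> words p n"
    then show "1 \<le> real (sep_num g K w (2 * e))"
      using sep_num_pos[OF K set_subset_if_in_words] e by simp
  qed (metis of_nat_le_iff of_nat_mult of_nat_1 of_nat_add)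
  also have "\<dots> = span_rate K' e n + ln (1 + card F) / real n"
    unfolding span_rate_def
    using avg_growth_scale[OF p_pos] span_num_pos[OF K' set_subset_if_in_words e] by simp
  finally show ?thesis .
qed

lemma htop_set_eq_SUP:
  assumes "compact K" "K \<subseteq> X" "K \<noteq> {}"
  shows "htop_set g p K = (SUP e\<in>{0<..}. limsup (\<lambda>n. ereal (sep_rate K e n)))"
  unfolding htop_set_eq_Lim_sep_rate
  by (rule Lim_at_right_0_antimono_eq_SUP, intro Limsup_mono always_eventually allI)
    (simp add: sep_rate_antimono[OF assms])

lemma Bd_antimono:
  assumes "compact K" "K \<subseteq> X" "K \<noteq> {}" "0 < e1" "e1 \<le> e2"
  shows "Bd g p K e2 \<le> Bd g p K e1"
  unfolding Bd_eq_limsup_span_rate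
  by (intro Limsup_mono always_eventually allI) (simp add: span_rate_antimono[OF assms])

lemma hd_pt_antimono:
  assumes x: "x \<in> X" and e: "0 < e1" "e1 \<le> e2"
  shows "hd_pt X g p x e2 \<le> hd_pt X g p x e1"
  unfolding hd_pt_def
proof (rule Inf_mono)
  fix b assume "b \<in> {Bd g p K e1 |K. compact_nbhd X K x}"
  then obtain K where K: "compact_nbhd X K x" "b = Bd g p K e1" by blast
  then have "Bd g p K e2 \<le> b"
    using Bd_antimono[OF _ _ _ e] mem_compact_nbhd[OF x] unfolding compact_nbhd_def by blast
  then show "\<exists>a\<in>{Bd g p K e2 |K. compact_nbhd X K x}. a \<le> b" using K(1) by blast
qed

lemma htop_pt_eq_SUP: "x \<in> X \<Longrightarrow> htop_pt X g p x = (SUP e\<in>{0<..}. hd_pt X g p x e)"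
  unfolding htop_pt_def by (rule Lim_at_right_0_antimono_eq_SUP) (rule hd_pt_antimono)

lemma hd_pt_le_limsup_sep_rate:
  assumes "x \<in> X" "compact_nbhd X K x" "0 < e"
  shows "hd_pt X g p x e \<le> limsup (\<lambda>n. ereal (sep_rate K e n))"
proof -
  have K: "compact K" "K \<subseteq> X" "K \<noteq> {}"
    using assms(2) mem_compact_nbhd[OF assms(1,2)] unfolding compact_nbhd_def by auto
  have "hd_pt X g p x e \<le> Bd g p K e"
    unfolding hd_pt_def by (rule Inf_lower) (use assms(2) in blast)
  also have "\<dots> \<le> limsup (\<lambda>n. ereal (sep_rate K e n))"
    unfolding Bd_eq_limsup_span_rate
    by (intro Limsup_mono always_eventually allI) (simp add: span_rate_le_sep_rate[OF K assms(3)])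
  finally show ?thesis .
qed

lemma limsup_sep_rate_le_Bd:
  assumes K: "compact K" "K \<subseteq> X" "K \<noteq> {}" and K': "compact K'" "K' \<subseteq> X" "K' \<noteq> {}"
    and F: "finite F" "K \<subseteq> K' \<union> F" and e: "0 < e"
  shows "limsup (\<lambda>n. ereal (sep_rate K (2 * e) n)) \<le> Bd g p K' e"
proof -
  have "limsup (\<lambda>n. ereal (sep_rate K (2 * e) n))
      \<le> limsup (\<lambda>n. ereal (span_rate K' e n) + ereal (ln (1 + card F) / real n))"
    using sep_rate_le_span_rate_add[OF assms] by (intro Limsup_mono always_eventually allI) simp
  also have "\<dots> \<le> limsup (\<lambda>n. ereal (span_rate K' e n)) + limsup (\<lambda>n. ereal (ln (1 + card F) / real n))"
    by (rule ereal_limsup_add_mono)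
  finally show ?thesis by (simp add: limsup_const_div_real Bd_eq_limsup_span_rate)
qed

theorem htop_set_le_htop_pt:
  assumes K: "K \<subseteq> X" "closed K" "x0 islimpt K" and unique: "\<And>y. y islimpt K \<Longrightarrow> y = x0"
  shows "htop_set g p K \<le> htop_pt X g p x0"
proof -
  have x0: "x0 \<in> K" "x0 \<in> X" using K closed_limpt by blast+
  then have K_ne: "K \<noteq> {}" by blast
  have cK: "compact K" using compact_Int_closed[OF compact_X K(2)] K(1) by (simp add: Int_absorb1)
  have local: "limsup (\<lambda>n. ereal (sep_rate K (2 * e) n)) \<le> hd_pt X g p x0 e" if e: "0 < e" for e
    unfolding hd_pt_def
  proof (rule Inf_greatest)
    fix b assume "b \<in> {Bd g p K' e |K'. compact_nbhd X K' x0}"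
    then obtain K' U where K': "b = Bd g p K' e" "compact K'" "K' \<subseteq> X" "x0 \<in> K'"
      and U: "open U" "x0 \<in> U" "U \<inter> X \<subseteq> K'"
      using mem_compact_nbhd[OF x0(2)] unfolding compact_nbhd_def by blast
    have "finite (K - U)" using finite_diff_open_if_unique_limpt[OF cK unique U(1,2)] .
    moreover have "K \<subseteq> K' \<union> (K - U)" using K(1) U(3) by blast
    ultimately show "limsup (\<lambda>n. ereal (sep_rate K (2 * e) n)) \<le> b"
      using limsup_sep_rate_le_Bd[OF cK K(1) _ K'(2,3) _ _ _ e] x0 K'(1,4) by blast
  qed
  show ?thesis
    unfolding htop_set_eq_SUP[OF cK K(1) K_ne] htop_pt_eq_SUP[OF x0(2)]
  proof (rule SUP_least)
    fix e :: real assume "e \<in> {0<..}"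
    then have "limsup (\<lambda>n. ereal (sep_rate K e n)) \<le> hd_pt X g p x0 (e / 2)"
      using local[of "e / 2"] by simp
    also have "\<dots> \<le> (SUP e\<in>{0<..}. hd_pt X g p x0 e)" using \<open>e \<in> {0<..}\<close> by (intro SUP_upper) simp
    finally show "limsup (\<lambda>n. ereal (sep_rate K e n)) \<le> (SUP e\<in>{0<..}. hd_pt X g p x0 e)" .
  qed
qed

lemma exists_finite_subset_same_sep_rate:
  assumes K: "compact K" "K \<subseteq> X" "K \<noteq> {}"
    and scales: "finite S" "S \<subseteq> {0<..}" and lengths: "finite N"
  shows "\<exists>A\<subseteq>K. finite A \<and> A \<noteq> {} \<and> (\<forall>e\<in>S. \<forall>n\<in>N. sep_rate A e n = sep_rate K e n)"
proof -
  define E where "E e w = (SOME E. E \<subseteq> K \<and> finite E \<and> separated g w e E \<and> card E = sep_num g K w e)"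
    for e w
  have E: "E e w \<subseteq> K \<and> finite (E e w) \<and> separated g w e (E e w) \<and> card (E e w) = sep_num g K w e"
    if "e \<in> S" "w \<in> words p n" for e n w
  proof -
    have "0 < e" using that(1) scales(2) by auto
    then have "\<exists>E. E \<subseteq> K \<and> finite E \<and> separated g w e E \<and> card E = sep_num g K w e"
      using sep_num_attained(1)[OF K(1,2) set_subset_if_in_words[OF that(2)]] by blast
    then show ?thesis unfolding E_def by (rule someI_ex)
  qed
  obtain a where "a \<in> K" using K(3) by blast
  define A where "A = insert a (\<Union>e\<in>S. \<Union>n\<in>N. \<Union>w\<in>words p n. E e w)"
  have A: "A \<subseteq> K" "finite A" "A \<noteq> {}"
    unfolding A_def using \<open>a \<in> K\<close> E scales(1) lengths finite_words by auto
  have "sep_num g A w e = sep_num g K w e" if "e \<in> S" "n \<in> N" "w \<in> words p n" for e n w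
  proof (rule antisym)
    have A': "compact A" "A \<subseteq> X" using A K(2) finite_imp_compact by auto
    have w: "set w \<subseteq> {..<p}" and e: "0 < e" using set_subset_if_in_words that scales(2) by auto
    show "sep_num g A w e \<le> sep_num g K w e"
      by (rule sep_num_mono[OF A'(1) A(1) K(1,2) w e])
    have "E e w \<subseteq> A" unfolding A_def using that by blast
    then have "card (E e w) \<le> sep_num g A w e"
      using card_le_sep_num[OF A' w e] E[OF that(1,3)] by blast
    then show "sep_num g K w e \<le> sep_num g A w e" using E[OF that(1,3)] by simp
  qed
  then have "sep_rate A e n = sep_rate K e n" if "e \<in> S" "n \<in> N" for e n
    unfolding sep_rate_def avg_growth_def using that by simp
  then show ?thesis using A by blast
qed

lemma exists_finite_set_near_local_entropy:
  assumes x0: "x0 \<in> X" and B: "compact_nbhd X B x0" and J: "finite J" "J \<subseteq> {0<..}"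
  shows "\<exists>A r. A \<subseteq> B \<and> finite A \<and> A \<noteq> {} \<and> (\<forall>e. k \<le> r e) \<and>
    (\<forall>e\<in>J. lower_approx (hd_pt X g p x0 e) k \<le> ereal (sep_rate A e (r e)))"
proof -
  have "\<exists>n\<ge>k. e \<in> J \<longrightarrow> lower_approx (hd_pt X g p x0 e) k \<le> ereal (sep_rate B e n)" for e
  proof (cases "e \<in> J")
    case True
    then have "0 < e" using J(2) by auto
    then show ?thesis
      using exists_late_index_ge_lower_approx[OF hd_pt_le_limsup_sep_rate[OF x0 B]] by blast
  qed auto
  then obtain r where r: "\<And>e. k \<le> r e"
    "\<And>e. e \<in> J \<Longrightarrow> lower_approx (hd_pt X g p x0 e) k \<le> ereal (sep_rate B e (r e))"
    by metis
  have "compact B" "B \<subseteq> X" "B \<noteq> {}"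
    using B mem_compact_nbhd[OF x0 B] unfolding compact_nbhd_def by auto
  from exists_finite_subset_same_sep_rate[OF this J finite_imageI[OF J(1), of r]]
  obtain A where A: "A \<subseteq> B \<and> finite A \<and> A \<noteq> {} \<and>
      (\<forall>e\<in>J. \<forall>n\<in>r ` J. sep_rate A e n = sep_rate B e n)" ..
  have "\<forall>e\<in>J. lower_approx (hd_pt X g p x0 e) k \<le> ereal (sep_rate A e (r e))"
    using r(2) A by simp
  then show ?thesis using A r(1) by blast
qed

lemma exists_countable_set_with_local_sep_rates:
  assumes x0: "x0 \<in> X" "x0 islimpt X"
  shows "\<exists>K. K \<subseteq> X \<and> countable K \<and> closed K \<and> x0 \<in> K \<and> x0 islimpt K \<and>
    (\<forall>y. y islimpt K \<longrightarrow> y = x0) \<and>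
    (\<forall>j. hd_pt X g p x0 (1 / real (Suc j)) \<le> limsup (\<lambda>n. ereal (sep_rate K (1 / real (Suc j)) n)))"
proof -
  define eps :: "nat \<Rightarrow> real" where "eps j = 1 / real (Suc j)" for j
  define B where "B k = X \<inter> cball x0 (eps k)" for k
  have eps: "0 < eps j" for j unfolding eps_def by simp
  have nbhd: "compact_nbhd X (B k) x0" for k
    unfolding compact_nbhd_def B_def using compact_X eps
    by (intro conjI exI[of _ "ball x0 (eps k)"] compact_Int_closed) auto
  have "\<exists>A r. A \<subseteq> B k \<and> finite A \<and> A \<noteq> {} \<and> (\<forall>e. k \<le> r e) \<and>
    (\<forall>e\<in>eps ` {..k}. lower_approx (hd_pt X g p x0 e) k \<le> ereal (sep_rate A e (r e)))" for k
    using eps by (intro exists_finite_set_near_local_entropy[OF x0(1) nbhd]) auto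
  then obtain A r where Ar: "\<And>k. A k \<subseteq> B k \<and> finite (A k) \<and> A k \<noteq> {} \<and> (\<forall>e. k \<le> r k e) \<and>
    (\<forall>e\<in>eps ` {..k}. lower_approx (hd_pt X g p x0 e) k \<le> ereal (sep_rate (A k) e (r k e)))"
    by metis
  then have A: "\<And>k. A k \<subseteq> B k" "\<And>k. finite (A k)" "\<And>k. A k \<noteq> {}"
    and r: "\<And>k e. k \<le> r k e"
      "\<And>k j. j \<le> k \<Longrightarrow> lower_approx (hd_pt X g p x0 (eps j)) k \<le> ereal (sep_rate (A k) (eps j) (r k (eps j)))"
    by auto
  have A_near: "A k \<subseteq> X \<inter> cball x0 (1 / real (Suc k))" for k
    using A(1)[of k] unfolding B_def eps_def by blast
  obtain K where K: "K \<subseteq> X" "countable K" "closed K" "x0 \<in> K" "x0 islimpt K"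
    "\<forall>y. y islimpt K \<longrightarrow> y = x0" "\<And>k. A k \<subseteq> K"
    using exists_countable_closed_superset_unique_limpt[OF x0 A(2) A_near] by blast
  have cK: "compact K" using compact_Int_closed[OF compact_X K(3)] K(1) by (metis inf.absorb2)
  have "hd_pt X g p x0 (eps j) \<le> limsup (\<lambda>n. ereal (sep_rate K (eps j) n))" for j
  proof (rule le_limsup_if_lower_approx_le[of "\<lambda>k. r k (eps j)"])
    show "\<forall>\<^sub>F k in sequentially. lower_approx (hd_pt X g p x0 (eps j)) k \<le> ereal (sep_rate K (eps j) (r k (eps j)))"
    proof (rule eventually_sequentiallyI)
      fix k assume "j \<le> k"
      have "sep_rate (A k) (eps j) (r k (eps j)) \<le> sep_rate K (eps j) (r k (eps j))"
        using sep_rate_mono[OF finite_imp_compact[OF A(2)] A(3) K(7) cK K(1) eps] .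
      then show "lower_approx (hd_pt X g p x0 (eps j)) k \<le> ereal (sep_rate K (eps j) (r k (eps j)))"
        using r(2)[OF \<open>j \<le> k\<close>] order_trans ereal_less_eq(3) by blast
    qed
  qed (rule r(1))
  then show ?thesis using K(1-6) unfolding eps_def by blast
qed

lemma htop_pt_le_htop_set:
  assumes x0: "x0 \<in> X" and K: "compact K" "K \<subseteq> X" "K \<noteq> {}"
    and local: "\<And>j. hd_pt X g p x0 (1 / real (Suc j)) \<le> limsup (\<lambda>n. ereal (sep_rate K (1 / real (Suc j)) n))"
  shows "htop_pt X g p x0 \<le> htop_set g p K"
  unfolding htop_pt_eq_SUP[OF x0] htop_set_eq_SUP[OF K]
proof (rule SUP_least)
  fix e :: real assume "e \<in> {0<..}"
  then obtain j where j: "1 / real (Suc j) < e"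
    using reals_Archimedean by (auto simp: inverse_eq_divide)
  then have "hd_pt X g p x0 e \<le> hd_pt X g p x0 (1 / real (Suc j))"
    by (intro hd_pt_antimono[OF x0]) auto
  also have "\<dots> \<le> limsup (\<lambda>n. ereal (sep_rate K (1 / real (Suc j)) n))" by (rule local)
  also have "\<dots> \<le> (SUP e\<in>{0<..}. limsup (\<lambda>n. ereal (sep_rate K e n)))"
    by (intro SUP_upper) simp
  finally show "hd_pt X g p x0 e \<le> (SUP e\<in>{0<..}. limsup (\<lambda>n. ereal (sep_rate K e n)))" .
qed

theorem exists_countable_set_htop_eq:
  assumes "x0 \<in> X" "x0 islimpt X"
  shows "\<exists>K. K \<subseteq> X \<and> countable K \<and> closed K \<and> x0 \<in> K \<and> x0 islimpt K \<and>
    (\<forall>y. y islimpt K \<longrightarrow> y = x0) \<and> htop_pt X g p x0 = htop_set g p K"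
proof -
  obtain K where K: "K \<subseteq> X" "countable K" "closed K" "x0 \<in> K" "x0 islimpt K"
    "\<forall>y. y islimpt K \<longrightarrow> y = x0"
    "\<forall>j. hd_pt X g p x0 (1 / real (Suc j)) \<le> limsup (\<lambda>n. ereal (sep_rate K (1 / real (Suc j)) n))"
    using exists_countable_set_with_local_sep_rates[OF assms] by blast
  have "compact K" using compact_Int_closed[OF compact_X K(3)] K(1) by (simp add: Int_absorb1)
  then have "htop_pt X g p x0 \<le> htop_set g p K"
    using htop_pt_le_htop_set[OF assms(1) _ K(1) _ K(7)[rule_format]] K(4) by blast
  moreover have "htop_set g p K \<le> htop_pt X g p x0"
    using htop_set_le_htop_pt[OF K(1,3,5) K(6)[rule_format]] .
  ultimately have "htop_pt X g p x0 = htop_set g p K" by (rule antisym)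
  then show ?thesis by (intro exI[of _ K] conjI K(1-6))
qed

end

theorem mainTheorem10:
  fixes X :: "'a::metric_space set" and g :: "nat \<Rightarrow> 'a \<Rightarrow> 'a" and p :: nat
  assumes "compact X" and "p \<ge> 1"
    and "\<And>i. i < p \<Longrightarrow> continuous_on X (g i) \<and> g i ` X \<subseteq> X"
  shows "(\<forall>K x0. K \<subseteq> X \<and> countable K \<and> closed K \<and> x0 islimpt K \<and>
              (\<forall>y. y islimpt K \<longrightarrow> y = x0)
            \<longrightarrow> htop_pt X g p x0 \<ge> htop_set g p K)
       \<and> (\<forall>x0\<in>X. x0 islimpt X \<longrightarrow>
            (\<exists>K. K \<subseteq> X \<and> countable K \<and> closed K \<and> x0 \<in> K \<and> x0 islimpt K \<and>
                 (\<forall>y. y islimpt K \<longrightarrow> y = x0) \<and> htop_pt X g p x0 = htop_set g p K))"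
proof -
  interpret free_semigroup_action X g p
    using assms by unfold_locales auto
  show ?thesis
    using htop_set_le_htop_pt exists_countable_set_htop_eq by blast
qed

end
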